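(* Let $\mathcal{X},\mathcal{Y}\in\mathbb{R}^{d\times n}$, let $\mathcal{Y}^{T}\mathcal{X}=U\Sigma V^{T}$ be a singular value decomposition (with $U,V\in\mathbb{R}^{n\times n}$ orthogonal and $\Sigma$ diagonal with nonnegative entries), and set $Q^\ast=UV^{T}$ and $\mathcal{Y}_h=\mathcal{Y}Q^\ast$. Let $\mathcal{P}_n$ be the set of $n\times n$ permutation matrices. Then: (i) $Q^\ast$ minimizes $\|\mathcal{X}-\mathcal{Y}Q\|_F$ over all orthogonal $n\times n$ matrices $Q$, and hence $\|\mathcal{X}-\mathcal{Y}_h\|_F\le \min_{T\in\mathcal{P}_n}\|\mathcal{X}-\mathcal{Y}T\|_F$; (ii) the identity matrix $I_n$ minimizes $\|\mathcal{X}-\mathcal{Y}_hT\|_F$ over $T\in\mathcal{P}_n$.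
   Context: $\|\cdot\|_F$ is the Frobenius norm. A permutation matrix is a matrix $T\in\{0,1\}^{n\times n}$ with every row sum and every column sum equal to $1$. *)

theory Defs
  imports "HOL-Analysis.Analysis"
begin

definition frob_norm :: "real^'n^'m \<Rightarrow> real" where
  "frob_norm A = sqrt (\<Sum>i\<in>UNIV. \<Sum>j\<in>UNIV. (A $ i $ j)^2)"

definition perm_matrix :: "real^'n^'n \<Rightarrow> bool" where
  "perm_matrix T \<longleftrightarrow> (\<forall>i j. T $ i $ j \<in> {0,1})
     \<and> (\<forall>i. (\<Sum>j\<in>UNIV. T $ i $ j) = 1) \<and> (\<forall>j. (\<Sum>i\<in>UNIV. T $ i $ j) = 1)"

definition nonneg_diag :: "real^'n^'n \<Rightarrow> bool" where
  "nonneg_diag S \<longleftrightarrow> (\<forall>i j. i \<noteq> j \<longrightarrow> S $ i $ j = 0) \<and> (\<forall>i. S $ i $ i \<ge> 0)"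

end

theory Submission
  imports Defs
begin

text \<open>Since \<open>\<parallel>A\<parallel>\<^sub>F\<^sup>2 = tr(A\<^sup>T A)\<close> and orthogonal \<open>Q\<close> preserve the norm of \<open>\<Y>\<close>,
  \<open>\<parallel>\<X> - \<Y>Q\<parallel>\<^sub>F\<^sup>2 = \<parallel>\<X>\<parallel>\<^sub>F\<^sup>2 + \<parallel>\<Y>\<parallel>\<^sub>F\<^sup>2 - 2 tr(Q\<^sup>T \<Y>\<^sup>T \<X>)\<close>, so minimising the distance means
  maximising \<open>tr(Q\<^sup>T U \<Sigma> V\<^sup>T) = tr(W \<Sigma>)\<close> with \<open>W = V\<^sup>T Q\<^sup>T U\<close> orthogonal. The diagonal
  entries of an orthogonal matrix are at most 1 and \<open>\<Sigma> \<ge> 0\<close> is diagonal, so \<open>tr(W \<Sigma>) \<le> tr \<Sigma>\<close>,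
  with equality for \<open>W = I\<close>, i.e. \<open>Q = UV\<^sup>T\<close>. Permutation matrices are orthogonal, which gives
  the comparison with permutations; and \<open>\<Y>\<^sub>h T = \<Y>(Q\<^sup>* T)\<close> with \<open>Q\<^sup>* T\<close> orthogonal gives (ii).\<close>

lemma matrix_diff_ldistrib: "(A::real^'n^'m) ** (B - C) = A ** B - A ** C"
  by (simp add: vec_eq_iff matrix_matrix_mult_def sum_subtractf[symmetric] algebra_simps)

lemma matrix_diff_rdistrib: "((A::real^'n^'m) - B) ** C = A ** C - B ** C"
  by (simp add: vec_eq_iff matrix_matrix_mult_def sum_subtractf[symmetric] algebra_simps)

lemma transpose_diff: "transpose ((A::real^'n^'m) - B) = transpose A - transpose B"
  by (simp add: vec_eq_iff transpose_def)

lemma trace_transpose: "trace (transpose (A::real^'n^'n)) = trace A"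
  by (simp add: trace_def transpose_def)

lemma trace_mul_diagonal:
  fixes W S :: "real^'n^'n"
  assumes "\<And>i j. i \<noteq> j \<Longrightarrow> S $ i $ j = 0"
  shows "trace (W ** S) = (\<Sum>i\<in>UNIV. W $ i $ i * S $ i $ i)"
proof -
  have "(W ** S) $ i $ i = W $ i $ i * S $ i $ i" for i
    unfolding matrix_matrix_mult_def using assms
    by (simp add: sum.remove[of UNIV i] sum.neutral)
  then show ?thesis by (simp add: trace_def)
qed

lemma frob_norm_sq_eq_trace: "(frob_norm (A::real^'n^'m))\<^sup>2 = trace (transpose A ** A)"
proof -
  have "(frob_norm A)\<^sup>2 = (\<Sum>i\<in>UNIV. \<Sum>j\<in>UNIV. (A $ i $ j)\<^sup>2)"
    unfolding frob_norm_def by (simp add: sum_nonneg)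
  also have "\<dots> = (\<Sum>j\<in>UNIV. \<Sum>i\<in>UNIV. (A $ i $ j)\<^sup>2)" by (rule sum.swap)
  also have "\<dots> = trace (transpose A ** A)"
    by (simp add: trace_def matrix_matrix_mult_def transpose_def power2_eq_square)
  finally show ?thesis .
qed

lemma frob_norm_le_iff_sq: "frob_norm A \<le> frob_norm B \<longleftrightarrow> (frob_norm A)\<^sup>2 \<le> (frob_norm B)\<^sup>2"
  by (simp add: frob_norm_def sum_nonneg power2_le_iff_abs_le)

lemma frob_norm_diff_orthogonal_sq:
  fixes X Y :: "real^'n^'d" and Q :: "real^'n^'n"
  assumes "orthogonal_matrix Q"
  shows "(frob_norm (X - Y ** Q))\<^sup>2
     = (frob_norm X)\<^sup>2 + (frob_norm Y)\<^sup>2 - 2 * trace (transpose Q ** (transpose Y ** X))"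
proof -
  have QQ: "Q ** transpose Q = mat 1" using assms by (simp add: orthogonal_matrix_def)
  have cross_left: "trace (transpose X ** (Y ** Q)) = trace (transpose Q ** (transpose Y ** X))"
  proof -
    have "transpose X ** (Y ** Q) = transpose (transpose Q ** (transpose Y ** X))"
      by (simp add: matrix_transpose_mul matrix_mul_assoc)
    then show ?thesis by (simp add: trace_transpose)
  qed
  have "trace ((transpose Q ** transpose Y) ** (Y ** Q))
      = trace (transpose Q ** ((transpose Y ** Y) ** Q))"
    by (simp add: matrix_mul_assoc)
  also have "\<dots> = trace (((transpose Y ** Y) ** Q) ** transpose Q)" by (rule trace_mul_sym)
  also have "\<dots> = trace (transpose Y ** Y)" by (simp add: QQ flip: matrix_mul_assoc)
  finally have square: "trace ((transpose Q ** transpose Y) ** (Y ** Q)) = trace (transpose Y ** Y)" .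
  have cross_right: "trace ((transpose Q ** transpose Y) ** X) = trace (transpose Q ** (transpose Y ** X))"
    by (simp add: matrix_mul_assoc)
  have expansion: "transpose (X - Y ** Q) ** (X - Y ** Q)
     = transpose X ** X - transpose X ** (Y ** Q) - (transpose Q ** transpose Y) ** X
       + (transpose Q ** transpose Y) ** (Y ** Q)"
    by (simp add: transpose_diff matrix_transpose_mul matrix_diff_ldistrib matrix_diff_rdistrib)
  show ?thesis
    unfolding frob_norm_sq_eq_trace expansion trace_add trace_sub cross_left cross_right square by simp
qed

lemma orthogonal_matrix_entry_abs_le_1:
  fixes W :: "real^'n^'n"
  assumes "orthogonal_matrix W"
  shows "\<bar>W $ i $ j\<bar> \<le> 1"
proof -
  have "\<bar>column j W $ i\<bar> \<le> norm (column j W)" by (rule component_le_norm_cart)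
  with assms show ?thesis by (simp add: orthogonal_matrix_orthonormal_columns column_def)
qed

lemma trace_orthogonal_mul_nonneg_diag_le:
  fixes W S :: "real^'n^'n"
  assumes "orthogonal_matrix W" "nonneg_diag S"
  shows "trace (W ** S) \<le> trace S"
proof -
  have "trace (W ** S) = (\<Sum>i\<in>UNIV. W $ i $ i * S $ i $ i)"
    using assms(2) by (intro trace_mul_diagonal) (simp add: nonneg_diag_def)
  also have "\<dots> \<le> (\<Sum>i\<in>UNIV. S $ i $ i)"
  proof (rule sum_mono)
    fix i
    have "W $ i $ i \<le> 1" using orthogonal_matrix_entry_abs_le_1[OF assms(1)] abs_le_D1 by blast
    moreover have "S $ i $ i \<ge> 0" using assms(2) by (simp add: nonneg_diag_def)
    ultimately show "W $ i $ i * S $ i $ i \<le> S $ i $ i" using mult_right_mono by fastforce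
  qed
  finally show ?thesis by (simp add: trace_def)
qed

lemma orthogonal_procrustes:
  fixes X Y :: "real^'n^'d" and U V S Q :: "real^'n^'n"
  assumes "orthogonal_matrix U" "orthogonal_matrix V" "nonneg_diag S"
    and svd: "transpose Y ** X = U ** S ** transpose V"
    and "orthogonal_matrix Q"
  shows "frob_norm (X - Y ** (U ** transpose V)) \<le> frob_norm (X - Y ** Q)"
proof -
  let ?Qs = "U ** transpose V"
  have rotate: "trace (transpose P ** (transpose Y ** X)) = trace ((transpose V ** transpose P ** U) ** S)"
    for P :: "real^'n^'n"
    unfolding svd by (simp add: matrix_mul_assoc trace_mul_sym[of _ "transpose V"])
  have "transpose V ** transpose ?Qs ** U = (transpose V ** V) ** (transpose U ** U)"
    by (simp add: matrix_transpose_mul matrix_mul_assoc)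
  also have "\<dots> = mat 1" using assms(1,2) by (simp add: orthogonal_matrix_def)
  finally have "trace (transpose ?Qs ** (transpose Y ** X)) = trace S" by (simp add: rotate)
  moreover have "trace (transpose Q ** (transpose Y ** X)) \<le> trace S"
    unfolding rotate using assms
    by (intro trace_orthogonal_mul_nonneg_diag_le) (simp_all add: orthogonal_matrix_mul)
  moreover have "orthogonal_matrix ?Qs" using assms(1,2) by (simp add: orthogonal_matrix_mul)
  ultimately show ?thesis
    using assms(5) by (simp add: frob_norm_le_iff_sq frob_norm_diff_orthogonal_sq)
qed

lemma perm_matrix_row_disjoint:
  fixes T :: "real^'n^'n"
  assumes "perm_matrix T" "j \<noteq> k"
  shows "T $ i $ j * T $ i $ k = 0"
proof (rule ccontr)
  assume "T $ i $ j * T $ i $ k \<noteq> 0"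
  with assms(1) have "T $ i $ j = 1" "T $ i $ k = 1" by (auto simp: perm_matrix_def)
  moreover have "T $ i $ l \<ge> 0" for l
    using assms(1) unfolding perm_matrix_def by (metis insertE order.refl singletonD zero_le_one)
  then have "(\<Sum>l\<in>{j,k}. T $ i $ l) \<le> (\<Sum>l\<in>UNIV. T $ i $ l)"
    by (intro sum_mono2) auto
  ultimately show False using assms by (simp add: perm_matrix_def)
qed

lemma perm_matrix_imp_orthogonal_matrix:
  fixes T :: "real^'n^'n"
  assumes "perm_matrix T"
  shows "orthogonal_matrix T"
proof -
  have "(transpose T ** T) $ j $ k = mat 1 $ j $ k" for j k
  proof (cases "j = k")
    case True
    have "(\<Sum>i\<in>UNIV. T $ i $ j * T $ i $ j) = (\<Sum>i\<in>UNIV. T $ i $ j)"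
      using assms by (intro sum.cong) (auto simp: perm_matrix_def)
    with True assms show ?thesis
      by (simp add: matrix_matrix_mult_def transpose_def mat_def perm_matrix_def)
  next
    case False
    with assms show ?thesis
      by (simp add: matrix_matrix_mult_def transpose_def mat_def perm_matrix_row_disjoint)
  qed
  then show ?thesis by (simp add: orthogonal_matrix vec_eq_iff)
qed

lemma perm_matrix_mat_1: "perm_matrix (mat 1 :: real^'n^'n)"
  by (simp add: perm_matrix_def mat_def)

theorem mainTheorem2:
  fixes X Y :: "real^'n^'d" and U V S :: "real^'n^'n"
  assumes "orthogonal_matrix U" and "orthogonal_matrix V" and "nonneg_diag S"
    and "transpose Y ** X = U ** S ** transpose V"
  defines "Qs \<equiv> U ** transpose V"
  defines "Yh \<equiv> Y ** Qs"
  shows "(\<forall>Q. orthogonal_matrix Q \<longrightarrow> frob_norm (X - Y ** Qs) \<le> frob_norm (X - Y ** Q))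
       \<and> (\<forall>T. perm_matrix T \<longrightarrow> frob_norm (X - Yh) \<le> frob_norm (X - Y ** T))
       \<and> perm_matrix (mat 1 :: real^'n^'n)
       \<and> (\<forall>T. perm_matrix T \<longrightarrow> frob_norm (X - Yh ** mat 1) \<le> frob_norm (X - Yh ** T))"
proof -
  have optimal: "frob_norm (X - Y ** Qs) \<le> frob_norm (X - Y ** Q)" if "orthogonal_matrix Q" for Q
    unfolding Qs_def using assms(1-4) that by (rule orthogonal_procrustes)
  have "orthogonal_matrix (Qs ** T)" if "perm_matrix T" for T
    using assms(1,2) that
    by (simp add: Qs_def orthogonal_matrix_mul perm_matrix_imp_orthogonal_matrix)
  then have "frob_norm (X - Yh ** mat 1) \<le> frob_norm (X - Yh ** T)" if "perm_matrix T" for T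
    using optimal that by (simp add: Yh_def flip: matrix_mul_assoc)
  with optimal show ?thesis
    by (simp add: Yh_def perm_matrix_mat_1 perm_matrix_imp_orthogonal_matrix)
qed

end
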